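(* Let $d\in\mathbb{N}$. For all $u,v\in\mathbb{N}$, $$\begin{pmatrix}(1/v)\,I_d&0\\0&u\,I_d\end{pmatrix}\Pi\subseteq\Pi,$$ that is, $(x,y)\in\Pi$ implies $(x/v,\,uy)\in\Pi$.
   Context: For $z\in\mathbb{R}^d$, $\|z\|$ denotes the sup-norm distance from $z$ to $\mathbb{Z}^d$. Write $\mathbb{N}=\{1,2,\dots\}$. For $\psi:\mathbb{N}\to\mathbb{R}_{\ge 0}$, let $W(\psi)$ be the set of pairs $(x,y)\in\mathbb{R}^d\times\mathbb{R}^d$ for which $\|nx+y\|<\psi(n)$ holds for infinitely many $n\in\mathbb{N}$. $\mathcal{D}$ is the set of all non-increasing $\psi:\mathbb{N}\to\mathbb{R}_{\ge0}$ with $\sum_n\psi(n)^d=\infty$, and $\Pi=\bigcap_{\psi\in\mathcal{D}}W(\psi)$. $I_d$ is the $d\times d$ identity matrix. *)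

theory Defs
  imports "HOL-Analysis.Analysis"
begin

definition dist_int :: "real \<Rightarrow> real" where
  "dist_int t = (INF k\<in>(\<int>::real set). \<bar>t - k\<bar>)"

definition znorm :: "real ^ 'd \<Rightarrow> real" where
  "znorm z = Max (range (\<lambda>i. dist_int (z $ i)))"

definition W :: "(nat \<Rightarrow> real) \<Rightarrow> ((real ^ 'd) \<times> (real ^ 'd)) set" where
  "W \<psi> = {(x, y). infinite {n::nat. n \<ge> 1 \<and> znorm (of_nat n *\<^sub>R x + y) < \<psi> n}}"

definition Dclass :: "'d itself \<Rightarrow> (nat \<Rightarrow> real) set" where
  "Dclass _ = {\<psi>. (\<forall>n\<ge>1. \<psi> n \<ge> 0) \<and> (\<forall>m n. 1 \<le> m \<and> m \<le> n \<longrightarrow> \<psi> n \<le> \<psi> m)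
                  \<and> \<not> summable (\<lambda>n. \<psi> (Suc n) ^ CARD('d))}"

definition PiSet :: "((real ^ 'd) \<times> (real ^ 'd)) set" where
  "PiSet = (\<Inter>\<psi>\<in>Dclass TYPE('d). W \<psi>)"

end

theory Submission
  imports Defs
begin

text \<open>Given \<open>\<psi>\<close> in \<open>\<D>\<close>, put \<open>K = u v\<close> and \<open>\<phi> m = \<psi> (K m) / u\<close>. Since \<open>\<psi>\<close> is non-increasing,
  \<open>\<Sum> \<psi>(n)^d \<le> K \<Sum> \<psi>(K m)^d\<close> up to a constant, so \<open>\<phi>\<close> is again in \<open>\<D>\<close> and \<open>(x, y) \<in> W \<phi>\<close>.
  For each of the infinitely many \<open>m\<close> with \<open>\<parallel>m x + y\<parallel> < \<phi> m\<close>, the index \<open>n = K m\<close> satisfies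
  \<open>\<parallel>n (x / v) + u y\<parallel> = \<parallel>u (m x + y)\<parallel> \<le> u \<parallel>m x + y\<parallel> < \<psi> n\<close>, so \<open>(x / v, u y) \<in> W \<psi>\<close>.\<close>

lemma dist_int_eq_abs_round: "dist_int t = \<bar>t - of_int (round t)\<bar>"
proof -
  have bdd: "bdd_below ((\<lambda>k. \<bar>t - k\<bar>) ` (\<int>::real set))"
    by (rule bdd_belowI[of _ 0]) auto
  have "dist_int t \<le> \<bar>t - of_int (round t)\<bar>"
    unfolding dist_int_def by (rule cINF_lower[OF bdd]) auto
  moreover have "\<bar>t - of_int (round t)\<bar> \<le> dist_int t"
    unfolding dist_int_def
    by (rule cINF_greatest) (auto elim!: Ints_cases intro: round_diff_minimal)
  ultimately show ?thesis by linarith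
qed

lemma dist_int_le: "k \<in> \<int> \<Longrightarrow> dist_int t \<le> \<bar>t - k\<bar>"
  by (metis Ints_cases dist_int_eq_abs_round round_diff_minimal)

lemma dist_int_of_nat_mult_le: "dist_int (real u * t) \<le> real u * dist_int t"
proof -
  have "dist_int (real u * t) \<le> \<bar>real u * t - real u * of_int (round t)\<bar>"
    by (rule dist_int_le) simp
  also have "\<dots> = real u * dist_int t"
    by (simp add: dist_int_eq_abs_round abs_mult right_diff_distrib[symmetric])
  finally show ?thesis .
qed

lemma dist_int_le_znorm: "dist_int (z $ i) \<le> znorm z"
  unfolding znorm_def by (rule Max_ge) auto

lemma znorm_scaleR_of_nat_le: "znorm (real u *\<^sub>R z) \<le> real u * znorm z"
proof -
  have "dist_int ((real u *\<^sub>R z) $ i) \<le> real u * znorm z" for i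
    using dist_int_of_nat_mult_le[of u "z $ i"] dist_int_le_znorm[of z i]
    by (simp add: order_trans mult_left_mono)
  then show ?thesis
    unfolding znorm_def[of "real u *\<^sub>R z"] by (subst Max_le_iff) auto
qed

text \<open>Each block \<open>[K m, K m + K)\<close> of shifted indices is dominated termwise by \<open>f (K (m + 1))\<close>.\<close>

lemma summable_of_summable_mult_subseq:
  fixes f :: "nat \<Rightarrow> real" and K :: nat
  assumes K: "K \<ge> 1" and nonneg: "\<forall>n\<ge>1. f n \<ge> 0"
    and antimono: "\<forall>m n. 1 \<le> m \<and> m \<le> n \<longrightarrow> f n \<le> f m"
    and subseq: "summable (\<lambda>m. f (K * Suc m))"
  shows "summable (\<lambda>n. f (Suc n))"
proof -
  have block_le: "(\<Sum>j\<in>{m * K..<m * K + K}. f (j + K)) \<le> real K * f (K * Suc m)" for m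
  proof -
    have "(\<Sum>j\<in>{m * K..<m * K + K}. f (j + K)) \<le> (\<Sum>j\<in>{m * K..<m * K + K}. f (K * Suc m))"
      using K antimono by (intro sum_mono) (auto simp: algebra_simps)
    then show ?thesis by simp
  qed
  have "summable (\<lambda>j. f (j + K))"
  proof (rule bounded_imp_summable)
    fix n
    show "0 \<le> f (n + K)" using nonneg K by simp
    have "Suc n \<le> Suc n * K" using K by (metis mult.right_neutral mult_le_mono2)
    then have "(\<Sum>j\<le>n. f (j + K)) \<le> (\<Sum>j<Suc n * K. f (j + K))"
      using K nonneg by (intro sum_mono2) auto
    also have "\<dots> = (\<Sum>m<Suc n. \<Sum>j\<in>{m * K..<m * K + K}. f (j + K))"
      by (rule sum.nat_group[symmetric])
    also have "\<dots> \<le> real K * (\<Sum>m<Suc n. f (K * Suc m))"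
      unfolding sum_distrib_left by (intro sum_mono block_le)
    also have "\<dots> \<le> real K * suminf (\<lambda>m. f (K * Suc m))"
      using K nonneg by (intro mult_left_mono sum_le_suminf[OF subseq]) auto
    finally show "(\<Sum>j\<le>n. f (j + K)) \<le> real K * suminf (\<lambda>m. f (K * Suc m))" .
  qed
  then show ?thesis
    by (simp add: summable_Suc_iff)
qed

lemma Dclass_rescale:
  fixes \<psi> :: "nat \<Rightarrow> real" and K :: nat and c :: real
  assumes "\<psi> \<in> Dclass TYPE('d)" and K: "K \<ge> 1" and c: "c > 0"
  shows "(\<lambda>m. \<psi> (K * m) / c) \<in> Dclass TYPE('d)"
proof -
  from assms(1) have nonneg: "\<forall>n\<ge>1. \<psi> n \<ge> 0"
    and antimono: "\<forall>m n. 1 \<le> m \<and> m \<le> n \<longrightarrow> \<psi> n \<le> \<psi> m"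
    and divergent: "\<not> summable (\<lambda>n. \<psi> (Suc n) ^ CARD('d))"
    unfolding Dclass_def by auto
  have "\<not> summable (\<lambda>m. (\<psi> (K * Suc m) / c) ^ CARD('d))"
  proof
    assume "summable (\<lambda>m. (\<psi> (K * Suc m) / c) ^ CARD('d))"
    then have "summable (\<lambda>m. c ^ CARD('d) * (\<psi> (K * Suc m) / c) ^ CARD('d))"
      by (rule summable_mult)
    then have "summable (\<lambda>m. \<psi> (K * Suc m) ^ CARD('d))"
      using c by (simp add: power_divide)
    moreover have "\<forall>n\<ge>1. \<psi> n ^ CARD('d) \<ge> 0"
      using nonneg by simp
    moreover have "\<forall>m n. 1 \<le> m \<and> m \<le> n \<longrightarrow> \<psi> n ^ CARD('d) \<le> \<psi> m ^ CARD('d)"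
      using nonneg antimono by (simp add: power_mono)
    ultimately have "summable (\<lambda>n. \<psi> (Suc n) ^ CARD('d))"
      using summable_of_summable_mult_subseq[OF K, of "\<lambda>n. \<psi> n ^ CARD('d)"] by simp
    with divergent show False ..
  qed
  moreover have "\<psi> (K * n) / c \<le> \<psi> (K * m) / c" if "1 \<le> m" "m \<le> n" for m n
  proof -
    have "K * m \<le> K * n" "1 \<le> K * m" using that K by simp_all
    then show ?thesis using antimono c by (simp add: divide_right_mono)
  qed
  moreover have "\<psi> (K * n) / c \<ge> 0" if "n \<ge> 1" for n
    using that K c nonneg by simp
  ultimately show ?thesis
    unfolding Dclass_def by blast
qed

lemma W_rescale:
  fixes x y :: "real ^ 'd" and u v :: nat
  assumes u: "u \<ge> 1" and v: "v \<ge> 1"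
    and "(x, y) \<in> W (\<lambda>m. \<psi> (u * v * m) / real u)"
  shows "((1 / real v) *\<^sub>R x, real u *\<^sub>R y) \<in> W \<psi>"
proof -
  define A where "A = {m::nat. m \<ge> 1 \<and> znorm (of_nat m *\<^sub>R x + y) < \<psi> (u * v * m) / real u}"
  have "infinite A" using assms(3) unfolding W_def A_def by simp
  moreover have "inj (\<lambda>m::nat. u * v * m)" using u v by (intro injI) simp
  ultimately have "infinite ((\<lambda>m. u * v * m) ` A)"
    by (meson finite_imageD inj_on_subset subset_UNIV)
  moreover have "(\<lambda>m. u * v * m) ` A \<subseteq>
      {n. n \<ge> 1 \<and> znorm (of_nat n *\<^sub>R ((1 / real v) *\<^sub>R x) + real u *\<^sub>R y) < \<psi> n}"
  proof clarify
    fix m assume "m \<in> A"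
    then have m: "m \<ge> 1" and lt: "real u * znorm (of_nat m *\<^sub>R x + y) < \<psi> (u * v * m)"
      using u unfolding A_def by (auto simp: field_simps)
    have "of_nat (u * v * m) *\<^sub>R ((1 / real v) *\<^sub>R x) + real u *\<^sub>R y = real u *\<^sub>R (of_nat m *\<^sub>R x + y)"
      using v by (simp add: scaleR_add_right)
    moreover have "znorm (real u *\<^sub>R (of_nat m *\<^sub>R x + y)) < \<psi> (u * v * m)"
      using znorm_scaleR_of_nat_le lt by (rule le_less_trans)
    ultimately show "1 \<le> u * v * m \<and>
        znorm (of_nat (u * v * m) *\<^sub>R ((1 / real v) *\<^sub>R x) + real u *\<^sub>R y) < \<psi> (u * v * m)"
      using m u v by simp
  qed
  ultimately show ?thesis
    unfolding W_def using finite_subset by blast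
qed

theorem lemma11:
  fixes x y :: "real ^ 'd" and u v :: nat
  assumes "u \<ge> 1" and "v \<ge> 1"
    and "(x, y) \<in> (PiSet :: ((real ^ 'd) \<times> (real ^ 'd)) set)"
  shows "((1 / real v) *\<^sub>R x, real u *\<^sub>R y) \<in> (PiSet :: ((real ^ 'd) \<times> (real ^ 'd)) set)"
  unfolding PiSet_def
proof (rule INT_I)
  fix \<psi> assume "\<psi> \<in> Dclass TYPE('d)"
  then have "(\<lambda>m. \<psi> (u * v * m) / real u) \<in> Dclass TYPE('d)"
    using assms(1,2) by (intro Dclass_rescale) auto
  with assms(3) have "(x, y) \<in> W (\<lambda>m. \<psi> (u * v * m) / real u)"
    unfolding PiSet_def by blast
  then show "((1 / real v) *\<^sub>R x, real u *\<^sub>R y) \<in> W \<psi>"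
    by (rule W_rescale[OF assms(1,2)])
qed

end
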